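(* For all $q,p\in\mathbb{C}^\times$ and $n\ge1$, the operator $R=R_n(q,p)$ satisfies the Yang–Baxter equation $R_{12}R_{13}R_{23}=R_{23}R_{13}R_{12}$, and the operator $\check R=pRP$ satisfies the Hecke equation $(\check R-q)(\check R+q^{-1})=0$.
   Context: $V=\mathbb{C}^n$ with basis $e_1,\dots,e_n$; $P$ is the flip on $V\otimes V$; operators are written $R(e_i\otimes e_j)=\sum_{k,l}R_{ij}^{kl}e_k\otimes e_l$. For $q,p\in\mathbb{C}^\times$, the two-parameter Cremmer–Gervais matrix $R=R_n(q,p)$ has entries (for $1\le i,j,k,l\le n$): $pR_{ij}^{kl}=qp^{2(l-i)}$ if $i=k\ge j=l$; $pR_{ij}^{kl}=q^{-1}p^{2(l-i)}$ if $i=k<j=l$; $pR_{ij}^{kl}=(q-q^{-1})p^{2(l-i)}$ if $j\le k<i$ and $i+j=k+l$; $pR_{ij}^{kl}=(q^{-1}-q)p^{2(l-i)}$ if $i<k<j$ and $i+j=k+l$; and $R_{ij}^{kl}=0$ otherwise. (For $q=p^n$ this is the $R$-matrix of Cremmer and Gervais.) *)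

theory Defs
  imports Complex_Main
begin

text \<open>Operators on V tensor V (V = C^n, basis e_1..e_n) are represented by their
coefficient functions: A (i,j) (k,l) = A_ij^kl, i.e. A(e_i (x) e_j) = sum A_ij^kl e_k (x) e_l.
Similarly for V tensor V tensor V with index triples.\<close>

definition idx2 :: "nat \<Rightarrow> (nat \<times> nat) set" where
  "idx2 n = {1..n} \<times> {1..n}"

definition idx3 :: "nat \<Rightarrow> (nat \<times> nat \<times> nat) set" where
  "idx3 n = {1..n} \<times> {1..n} \<times> {1..n}"

text \<open>Composition A B (first B, then A): (AB)_x^y = sum_z B_x^z A_z^y.\<close>
definition comp2 :: "nat \<Rightarrow> (nat \<times> nat \<Rightarrow> nat \<times> nat \<Rightarrow> complex)
    \<Rightarrow> (nat \<times> nat \<Rightarrow> nat \<times> nat \<Rightarrow> complex) \<Rightarrow> (nat \<times> nat \<Rightarrow> nat \<times> nat \<Rightarrow> complex)" where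
  "comp2 n A B x y = (\<Sum>z\<in>idx2 n. B x z * A z y)"

definition comp3 :: "nat \<Rightarrow> (nat \<times> nat \<times> nat \<Rightarrow> nat \<times> nat \<times> nat \<Rightarrow> complex)
    \<Rightarrow> (nat \<times> nat \<times> nat \<Rightarrow> nat \<times> nat \<times> nat \<Rightarrow> complex)
    \<Rightarrow> (nat \<times> nat \<times> nat \<Rightarrow> nat \<times> nat \<times> nat \<Rightarrow> complex)" where
  "comp3 n A B x y = (\<Sum>z\<in>idx3 n. B x z * A z y)"

definition id2 :: "nat \<times> nat \<Rightarrow> nat \<times> nat \<Rightarrow> complex" where
  "id2 x y = (if x = y then 1 else 0)"

definition CG :: "complex \<Rightarrow> complex \<Rightarrow> nat \<times> nat \<Rightarrow> nat \<times> nat \<Rightarrow> complex" where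
  "CG q p x y = (case x of (i, j) \<Rightarrow> case y of (k, l) \<Rightarrow>
     (let e = p powi (2 * (int l - int i)) in
      if i = k \<and> j = l \<and> i \<ge> j then q * e / p
      else if i = k \<and> j = l \<and> i < j then inverse q * e / p
      else if j \<le> k \<and> k < i \<and> i + j = k + l then (q - inverse q) * e / p
      else if i < k \<and> k < j \<and> i + j = k + l then (inverse q - q) * e / p
      else 0))"

definition leg12 :: "(nat \<times> nat \<Rightarrow> nat \<times> nat \<Rightarrow> complex) \<Rightarrow> nat \<times> nat \<times> nat \<Rightarrow> nat \<times> nat \<times> nat \<Rightarrow> complex" where
  "leg12 R x y = (case x of (i, j, m) \<Rightarrow> case y of (k, l, r) \<Rightarrow>
     R (i, j) (k, l) * (if m = r then 1 else 0))"

definition leg13 :: "(nat \<times> nat \<Rightarrow> nat \<times> nat \<Rightarrow> complex) \<Rightarrow> nat \<times> nat \<times> nat \<Rightarrow> nat \<times> nat \<times> nat \<Rightarrow> complex" where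
  "leg13 R x y = (case x of (i, j, m) \<Rightarrow> case y of (k, l, r) \<Rightarrow>
     R (i, m) (k, r) * (if j = l then 1 else 0))"

definition leg23 :: "(nat \<times> nat \<Rightarrow> nat \<times> nat \<Rightarrow> complex) \<Rightarrow> nat \<times> nat \<times> nat \<Rightarrow> nat \<times> nat \<times> nat \<Rightarrow> complex" where
  "leg23 R x y = (case x of (i, j, m) \<Rightarrow> case y of (k, l, r) \<Rightarrow>
     R (j, m) (l, r) * (if i = k then 1 else 0))"

definition flip :: "nat \<times> nat \<Rightarrow> nat \<times> nat \<Rightarrow> complex" where
  "flip x y = (if y = (snd x, fst x) then 1 else 0)"

definition CGcheck :: "nat \<Rightarrow> complex \<Rightarrow> complex \<Rightarrow> nat \<times> nat \<Rightarrow> nat \<times> nat \<Rightarrow> complex" where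
  "CGcheck n q p x y = p * comp2 n (CG q p) flip x y"

end

(* The matrix R = R_n(q,p) acts on the monomials x^i y^j (1 <= i, j <= n) through the
   difference operator
     (D f)(x, y) = (A(x, s y) f(x / s, s y) + B(x, s y) f(y, x)) / p,    s = p^2,
   where A(u, v) = (q u - q^-1 v) / (u - v) and B(u, v) = -(q - q^-1) v / (u - v): after
   multiplication by u - v, the row sums of R against monomials telescope.  Products of
   matrices become compositions of such operators, so the Yang-Baxter equation for R and the
   Hecke relation for pRP reduce to the corresponding identities for D, which are rational
   identities between A and B.  Since D divides by x - s y, everything is evaluated at points
   whose coordinates are not related by integral powers of s.  The monomials remain linearly
   independent as functions on this set, because its complement is countable in each
   coordinate, so the operator identities give back the matrix identities. *)

theory Submission
  imports Defs "HOL-Analysis.Continuum_Not_Denumerable"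
begin

section \<open>Matrices realized by operators on functions\<close>

(* The basis vector e_w is modelled by the function m w; a matrix then sends m w to
   sum_v A w v * m v, in the index convention of Defs. *)
definition realizes :: "'i set \<Rightarrow> ('i \<Rightarrow> 'p \<Rightarrow> 'a::comm_ring_1) \<Rightarrow> 'p set
    \<Rightarrow> (('p \<Rightarrow> 'a) \<Rightarrow> 'p \<Rightarrow> 'a) \<Rightarrow> ('i \<Rightarrow> 'i \<Rightarrow> 'a) \<Rightarrow> bool" where
  "realizes I m G T A \<longleftrightarrow> (\<forall>w\<in>I. \<forall>P\<in>G. (\<Sum>v\<in>I. A w v * m v P) = T (m w) P)"

definition linear_op :: "(('p \<Rightarrow> 'a::comm_ring_1) \<Rightarrow> 'p \<Rightarrow> 'a) \<Rightarrow> bool" where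
  "linear_op T \<longleftrightarrow> (\<forall>f g. T (\<lambda>P. f P + g P) = (\<lambda>P. T f P + T g P))
                   \<and> (\<forall>c f. T (\<lambda>P. c * f P) = (\<lambda>P. c * T f P))"

definition local_op :: "'p set \<Rightarrow> (('p \<Rightarrow> 'a) \<Rightarrow> 'p \<Rightarrow> 'a) \<Rightarrow> bool" where
  "local_op G T \<longleftrightarrow> (\<forall>f g. (\<forall>P\<in>G. f P = g P) \<longrightarrow> (\<forall>P\<in>G. T f P = T g P))"

definition lin_independent_on :: "'i set \<Rightarrow> ('i \<Rightarrow> 'p \<Rightarrow> 'a::comm_ring_1) \<Rightarrow> 'p set \<Rightarrow> bool" where
  "lin_independent_on I m G \<longleftrightarrow> (\<forall>c. (\<forall>P\<in>G. (\<Sum>v\<in>I. c v * m v P) = 0) \<longrightarrow> (\<forall>v\<in>I. c v = 0))"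

lemma lin_independent_onD:
  "lin_independent_on I m G \<Longrightarrow> (\<And>P. P \<in> G \<Longrightarrow> (\<Sum>v\<in>I. c v * m v P) = 0) \<Longrightarrow> v \<in> I
    \<Longrightarrow> c v = 0"
  unfolding lin_independent_on_def by blast

lemma local_opD:
  "local_op G T \<Longrightarrow> (\<And>Q. Q \<in> G \<Longrightarrow> f Q = g Q) \<Longrightarrow> P \<in> G \<Longrightarrow> T f P = T g P"
  unfolding local_op_def by blast

lemma linear_op_sum:
  assumes "linear_op T"
  shows "T (\<lambda>P. \<Sum>v\<in>S. c v * g v P) = (\<lambda>P. \<Sum>v\<in>S. c v * T (g v) P)"
proof -
  have "T (\<lambda>P. 0 * f P) = (\<lambda>P. 0 * T f P)" for f
    using assms unfolding linear_op_def by blast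
  then have zero: "T (\<lambda>P. 0) = (\<lambda>P. 0)" by simp
  show ?thesis
  proof (induction S rule: infinite_finite_induct)
    case (insert v S)
    then show ?case using assms by (simp add: linear_op_def)
  qed (simp_all add: zero)
qed

lemma linear_op_compose: "linear_op T \<Longrightarrow> linear_op U \<Longrightarrow> linear_op (\<lambda>f. T (U f))"
  unfolding linear_op_def by simp

lemma local_op_compose: "local_op G T \<Longrightarrow> local_op G U \<Longrightarrow> local_op G (\<lambda>f. T (U f))"
  unfolding local_op_def by simp

lemma linear_op_add_id: "linear_op T \<Longrightarrow> linear_op (\<lambda>f P. T f P + c * f P)"
  unfolding linear_op_def by (simp add: fun_eq_iff algebra_simps)

lemma local_op_add_id: "local_op G T \<Longrightarrow> local_op G (\<lambda>f P. T f P + c * f P)"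
  unfolding local_op_def by fastforce

lemma realizes_comp:
  assumes A: "realizes I m G T A" and B: "realizes I m G U B"
    and T: "linear_op T" "local_op G T"
  shows "realizes I m G (\<lambda>f. T (U f)) (\<lambda>x y. \<Sum>z\<in>I. B x z * A z y)"
  unfolding realizes_def
proof (intro ballI)
  fix w P assume w: "w \<in> I" and P: "P \<in> G"
  have "(\<Sum>v\<in>I. (\<Sum>z\<in>I. B w z * A z v) * m v P) = (\<Sum>v\<in>I. \<Sum>z\<in>I. B w z * (A z v * m v P))"
    by (simp add: sum_distrib_right mult.assoc)
  also have "\<dots> = (\<Sum>z\<in>I. \<Sum>v\<in>I. B w z * (A z v * m v P))"
    by (rule sum.swap)
  also have "\<dots> = (\<Sum>z\<in>I. B w z * (\<Sum>v\<in>I. A z v * m v P))"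
    by (simp add: sum_distrib_left)
  also have "\<dots> = (\<Sum>z\<in>I. B w z * T (m z) P)"
    using A P by (simp add: realizes_def)
  also have "\<dots> = T (\<lambda>Q. \<Sum>z\<in>I. B w z * m z Q) P"
    by (simp add: linear_op_sum[OF T(1)])
  also have "\<dots> = T (U (m w)) P"
  proof (rule local_opD[OF T(2) _ P])
    show "(\<Sum>z\<in>I. B w z * m z Q) = U (m w) Q" if "Q \<in> G" for Q
      using B w that unfolding realizes_def by blast
  qed
  finally show "(\<Sum>v\<in>I. (\<Sum>z\<in>I. B w z * A z v) * m v P) = T (U (m w)) P" .
qed

lemma realizes_comp2:
  "realizes (idx2 n) m G T A \<Longrightarrow> realizes (idx2 n) m G U B \<Longrightarrow> linear_op T \<Longrightarrow> local_op G T
    \<Longrightarrow> realizes (idx2 n) m G (\<lambda>f. T (U f)) (comp2 n A B)"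
  using realizes_comp[of "idx2 n" m G T A U B] by (simp add: comp2_def[abs_def])

lemma realizes_comp3:
  "realizes (idx3 n) m G T A \<Longrightarrow> realizes (idx3 n) m G U B \<Longrightarrow> linear_op T \<Longrightarrow> local_op G T
    \<Longrightarrow> realizes (idx3 n) m G (\<lambda>f. T (U f)) (comp3 n A B)"
  using realizes_comp[of "idx3 n" m G T A U B] by (simp add: comp3_def[abs_def])

lemma realizes_scale:
  "realizes I m G T A \<Longrightarrow> realizes I m G (\<lambda>f P. c * T f P) (\<lambda>x y. c * A x y)"
  unfolding realizes_def by (simp add: mult.assoc flip: sum_distrib_left)

lemma realizes_add_id:
  assumes "finite I" "realizes I m G T A"
  shows "realizes I m G (\<lambda>f P. T f P + c * f P) (\<lambda>x y. A x y + c * (if x = y then 1 else 0))"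
  unfolding realizes_def
proof (intro ballI)
  fix w P assume w: "w \<in> I" and P: "P \<in> G"
  have "(A w v + c * (if w = v then 1 else 0)) * m v P = A w v * m v P + (if w = v then c * m v P else 0)"
    for v by (simp add: distrib_right)
  then have "(\<Sum>v\<in>I. (A w v + c * (if w = v then 1 else 0)) * m v P)
      = (\<Sum>v\<in>I. A w v * m v P) + (\<Sum>v\<in>I. if w = v then c * m v P else 0)"
    by (simp only: sum.distrib)
  also have "\<dots> = T (m w) P + c * m w P"
    using assms w P by (simp add: realizes_def sum.delta')
  finally show "(\<Sum>v\<in>I. (A w v + c * (if w = v then 1 else 0)) * m v P) = T (m w) P + c * m w P" .
qed

lemma realizes_zero: "realizes I m G (\<lambda>f P. 0) (\<lambda>x y. 0)"
  unfolding realizes_def by simp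

lemma realizes_unique:
  assumes "realizes I m G T A" "realizes I m G T' B" "lin_independent_on I m G"
    and "\<And>f P. P \<in> G \<Longrightarrow> T f P = T' f P" and "w \<in> I" "v \<in> I"
  shows "A w v = B w v"
proof -
  have "(\<Sum>v\<in>I. (A w v - B w v) * m v P) = 0" if "P \<in> G" for P
  proof -
    have "(\<Sum>v\<in>I. A w v * m v P) = T (m w) P" "(\<Sum>v\<in>I. B w v * m v P) = T' (m w) P"
      using assms(1,2,5) that unfolding realizes_def by auto
    then have "(\<Sum>v\<in>I. (A w v - B w v) * m v P) = T (m w) P - T' (m w) P"
      by (simp add: left_diff_distrib sum_subtractf)
    also have "\<dots> = 0" using assms(4) that by simp
    finally show ?thesis .
  qed
  then have "A w v - B w v = 0" by (rule lin_independent_onD[OF assms(3) _ assms(6)])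
  then show ?thesis by simp
qed

section \<open>Monomials on generic points\<close>

(* All integral powers of s are excluded so that the generic points are stable under the
   substitutions x / s, s * y and the coordinate swaps made by cg_op. *)
definition apart :: "complex \<Rightarrow> complex \<Rightarrow> complex \<Rightarrow> bool" where
  "apart s x y \<longleftrightarrow> (\<forall>k::int. x \<noteq> s powi k * y)"

lemma apart_commute:
  assumes "s \<noteq> 0" shows "apart s x y \<longleftrightarrow> apart s y x"
proof -
  have "x = s powi k * y \<longleftrightarrow> y = s powi (- k) * x" for k
    using assms by (auto simp: power_int_minus field_simps)
  then show ?thesis unfolding apart_def by (metis minus_minus)
qed

lemma apart_powi_left:
  assumes "s \<noteq> 0" shows "apart s (s powi a * x) y \<longleftrightarrow> apart s x y"
proof -
  have "s powi a * x = s powi k * y \<longleftrightarrow> x = s powi (k - a) * y" for k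
    using assms by (auto simp: power_int_diff field_simps)
  then show ?thesis unfolding apart_def by (metis add_diff_cancel diff_add_cancel)
qed

lemma apart_scale [simp]:
  assumes "s \<noteq> 0"
  shows "apart s (s * x) y \<longleftrightarrow> apart s x y" "apart s (x / s) y \<longleftrightarrow> apart s x y"
    and "apart s x (s * y) \<longleftrightarrow> apart s x y" "apart s x (y / s) \<longleftrightarrow> apart s x y"
proof -
  have *: "apart s (s * x) y \<longleftrightarrow> apart s x y" "apart s (x / s) y \<longleftrightarrow> apart s x y" for x y
    using apart_powi_left[OF assms, of 1 x y] apart_powi_left[OF assms, of "-1" x y]
    by (simp_all add: power_int_minus divide_inverse mult.commute)
  show "apart s (s * x) y \<longleftrightarrow> apart s x y" "apart s (x / s) y \<longleftrightarrow> apart s x y"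
    by (fact *)+
  show "apart s x (s * y) \<longleftrightarrow> apart s x y" "apart s x (y / s) \<longleftrightarrow> apart s x y"
    using * apart_commute[OF assms] by metis+
qed

lemma apart_imp_neq: "apart s x y \<Longrightarrow> x \<noteq> s * y"
  unfolding apart_def by (metis power_int_1_right)

lemma apart_imp_neq_sq: "apart s x y \<Longrightarrow> x \<noteq> s * (s * y)"
  unfolding apart_def by (metis mult.assoc power2_eq_square power_int_of_nat of_nat_numeral)

lemma countable_not_apart: "countable {x. \<not> apart s x y}"
proof -
  have "{x. \<not> apart s x y} = range (\<lambda>k::int. s powi k * y)"
    unfolding apart_def by auto
  then show ?thesis by simp
qed

definition generic2 :: "complex \<Rightarrow> (complex \<times> complex) set" where
  "generic2 s = {(x, y). apart s x y}"

definition generic3 :: "complex \<Rightarrow> (complex \<times> complex \<times> complex) set" where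
  "generic3 s = {(x, y, z). apart s x y \<and> apart s x z \<and> apart s y z}"

lemma generic2_closed:
  assumes "s \<noteq> 0" "(x, y) \<in> generic2 s"
  shows "(x / s, s * y) \<in> generic2 s" "(y, x) \<in> generic2 s"
  using assms apart_commute[OF assms(1)] by (auto simp: generic2_def)

lemma generic3_closed:
  assumes "s \<noteq> 0" "(x, y, z) \<in> generic3 s"
  shows "(x / s, s * y, z) \<in> generic3 s" "(x / s, y, s * z) \<in> generic3 s"
    "(x, y / s, s * z) \<in> generic3 s"
    "(y, x, z) \<in> generic3 s" "(z, y, x) \<in> generic3 s" "(x, z, y) \<in> generic3 s"
  using assms apart_commute[OF assms(1)] by (auto simp: generic3_def)

definition mono2 :: "nat \<times> nat \<Rightarrow> complex \<times> complex \<Rightarrow> complex" where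
  "mono2 w P = (case w of (i, j) \<Rightarrow> case P of (x, y) \<Rightarrow> x ^ i * y ^ j)"

definition mono3 :: "nat \<times> nat \<times> nat \<Rightarrow> complex \<times> complex \<times> complex \<Rightarrow> complex" where
  "mono3 w P = (case w of (i, j, m) \<Rightarrow> case P of (x, y, z) \<Rightarrow> x ^ i * y ^ j * z ^ m)"

lemma finite_idx2 [simp]: "finite (idx2 n)"
  unfolding idx2_def by simp

lemma sum_idx2: "(\<Sum>v\<in>idx2 n. g v) = (\<Sum>k\<in>{1..n}. \<Sum>l\<in>{1..n}. g (k, l))"
  unfolding idx2_def by (simp add: sum.cartesian_product split_def)

lemma sum_idx3: "(\<Sum>v\<in>idx3 n. g v) = (\<Sum>k\<in>{1..n}. \<Sum>l\<in>{1..n}. \<Sum>r\<in>{1..n}. g (k, l, r))"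
  unfolding idx3_def by (simp add: sum.cartesian_product split_def)

lemma sum_idx3_split:
  "(\<Sum>v\<in>idx3 n. g v) = (\<Sum>(k, l)\<in>idx2 n. \<Sum>r\<in>{1..n}. g (k, l, r))"
  "(\<Sum>v\<in>idx3 n. g v) = (\<Sum>(k, r)\<in>idx2 n. \<Sum>l\<in>{1..n}. g (k, l, r))"
  "(\<Sum>v\<in>idx3 n. g v) = (\<Sum>(l, r)\<in>idx2 n. \<Sum>k\<in>{1..n}. g (k, l, r))"
proof -
  show "(\<Sum>v\<in>idx3 n. g v) = (\<Sum>(k, l)\<in>idx2 n. \<Sum>r\<in>{1..n}. g (k, l, r))"
    by (simp add: sum_idx3 sum_idx2)
  have "(\<Sum>v\<in>idx3 n. g v) = (\<Sum>k\<in>{1..n}. \<Sum>r\<in>{1..n}. \<Sum>l\<in>{1..n}. g (k, l, r))"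
    unfolding sum_idx3 by (rule sum.cong[OF refl]) (rule sum.swap)
  then show "(\<Sum>v\<in>idx3 n. g v) = (\<Sum>(k, r)\<in>idx2 n. \<Sum>l\<in>{1..n}. g (k, l, r))"
    by (simp add: sum_idx2)
  have "(\<Sum>v\<in>idx3 n. g v) = (\<Sum>l\<in>{1..n}. \<Sum>k\<in>{1..n}. \<Sum>r\<in>{1..n}. g (k, l, r))"
    unfolding sum_idx3 by (rule sum.swap)
  also have "\<dots> = (\<Sum>l\<in>{1..n}. \<Sum>r\<in>{1..n}. \<Sum>k\<in>{1..n}. g (k, l, r))"
    by (rule sum.cong[OF refl]) (rule sum.swap)
  finally show "(\<Sum>v\<in>idx3 n. g v) = (\<Sum>(l, r)\<in>idx2 n. \<Sum>k\<in>{1..n}. g (k, l, r))"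
    by (simp add: sum_idx2)
qed

lemma poly_coeffs_eq_0:
  fixes d :: "nat \<Rightarrow> complex"
  assumes F: "countable F" and h: "\<And>X. X \<notin> F \<Longrightarrow> (\<Sum>k\<in>{1..n}. d k * X ^ k) = 0"
    and k: "k \<in> {1..n}"
  shows "d k = 0"
proof -
  define e where "e i = (if i = 0 then 0 else d i)" for i
  have "(\<Sum>i\<le>n. e i * X ^ i) = (\<Sum>k\<in>{1..n}. d k * X ^ k)" for X
  proof -
    have "(\<Sum>i\<le>n. e i * X ^ i) = (\<Sum>i\<in>{1..n}. e i * X ^ i)"
      by (rule sum.mono_neutral_right) (auto simp: e_def)
    also have "\<dots> = (\<Sum>k\<in>{1..n}. d k * X ^ k)"
      by (intro sum.cong) (auto simp: e_def)
    finally show ?thesis .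
  qed
  then have "UNIV - F \<subseteq> {X. (\<Sum>i\<le>n. e i * X ^ i) = 0}"
    using h by auto
  moreover have "infinite (UNIV - F)"
    using F uncountable_UNIV_complex uncountable_minus_countable countable_finite by blast
  ultimately have "infinite {X. (\<Sum>i\<le>n. e i * X ^ i) = 0}"
    using finite_subset by blast
  then have "\<forall>i\<le>n. e i = 0"
    using polyfun_finite_roots by blast
  then show ?thesis using k by (auto simp: e_def)
qed

lemma lin_independent_mono2: "lin_independent_on (idx2 n) mono2 (generic2 s)"
  unfolding lin_independent_on_def
proof (intro allI impI ballI)
  fix c v assume h: "\<forall>P\<in>generic2 s. (\<Sum>v\<in>idx2 n. c v * mono2 v P) = 0" and v: "v \<in> idx2 n"
  obtain k l where kl: "v = (k, l)" "k \<in> {1..n}" "l \<in> {1..n}"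
    using v unfolding idx2_def by auto
  have expand: "(\<Sum>v\<in>idx2 n. c v * mono2 v (x, y))
      = (\<Sum>k\<in>{1..n}. (\<Sum>l\<in>{1..n}. c (k, l) * y ^ l) * x ^ k)" for x y
    unfolding sum_idx2 mono2_def by (simp add: sum_distrib_left sum_distrib_right mult_ac)
  have "(\<Sum>l\<in>{1..n}. c (k, l) * y ^ l) = 0" for y
    by (rule poly_coeffs_eq_0[where d = "\<lambda>k. \<Sum>l\<in>{1..n}. c (k, l) * y ^ l",
          OF countable_not_apart[of s y] _ kl(2)])
      (use h expand in \<open>auto simp: generic2_def\<close>)
  then show "c v = 0"
    unfolding kl(1) by (intro poly_coeffs_eq_0[where d = "\<lambda>l. c (k, l)", OF countable_empty _ kl(3)]) auto
qed

lemma lin_independent_mono3: "lin_independent_on (idx3 n) mono3 (generic3 s)"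
  unfolding lin_independent_on_def
proof (intro allI impI ballI)
  fix c v assume h: "\<forall>P\<in>generic3 s. (\<Sum>v\<in>idx3 n. c v * mono3 v P) = 0" and v: "v \<in> idx3 n"
  obtain k l r where klr: "v = (k, l, r)" "k \<in> {1..n}" "l \<in> {1..n}" "r \<in> {1..n}"
    using v unfolding idx3_def by auto
  have expand: "(\<Sum>v\<in>idx3 n. c v * mono3 v (x, y, z))
      = (\<Sum>k\<in>{1..n}. (\<Sum>l\<in>{1..n}. (\<Sum>r\<in>{1..n}. c (k, l, r) * z ^ r) * y ^ l) * x ^ k)" for x y z
    unfolding sum_idx3 mono3_def by (simp add: sum_distrib_left sum_distrib_right mult_ac)
  have yz: "(\<Sum>l\<in>{1..n}. (\<Sum>r\<in>{1..n}. c (k, l, r) * z ^ r) * y ^ l) = 0" if "apart s y z" for y z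
    by (rule poly_coeffs_eq_0[where d = "\<lambda>k. \<Sum>l\<in>{1..n}. (\<Sum>r\<in>{1..n}. c (k, l, r) * z ^ r) * y ^ l",
          OF countable_Un[OF countable_not_apart[of s y] countable_not_apart[of s z]] _ klr(2)])
      (use h expand that in \<open>auto simp: generic3_def\<close>)
  have z: "(\<Sum>r\<in>{1..n}. c (k, l, r) * z ^ r) = 0" for z
    by (rule poly_coeffs_eq_0[where d = "\<lambda>l. \<Sum>r\<in>{1..n}. c (k, l, r) * z ^ r",
          OF countable_not_apart[of s z] _ klr(3)])
      (use yz in auto)
  show "c v = 0"
    unfolding klr(1) by (intro poly_coeffs_eq_0[where d = "\<lambda>r. c (k, l, r)", OF countable_empty _ klr(4)])
      (use z in auto)
qed

lemma realizes_flip: "realizes (idx2 n) mono2 G (\<lambda>f P. f (snd P, fst P)) flip"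
  unfolding realizes_def
proof (intro ballI)
  fix w P assume "w \<in> idx2 n"
  then have "(snd w, fst w) \<in> idx2 n" by (auto simp: idx2_def)
  have "(\<Sum>v\<in>idx2 n. flip w v * mono2 v P) = (\<Sum>v\<in>idx2 n. if v = (snd w, fst w) then mono2 v P else 0)"
    by (intro sum.cong) (auto simp: flip_def)
  also have "\<dots> = mono2 (snd w, fst w) P" using \<open>(snd w, fst w) \<in> idx2 n\<close> by simp
  finally have "(\<Sum>v\<in>idx2 n. flip w v * mono2 v P) = mono2 (snd w, fst w) P" .
  then show "(\<Sum>v\<in>idx2 n. flip w v * mono2 v P) = mono2 w (snd P, fst P)"
    by (simp add: mono2_def split_def)
qed

section \<open>The Cremmer--Gervais difference operator\<close>

definition cg_a :: "'a::field \<Rightarrow> 'a \<Rightarrow> 'a \<Rightarrow> 'a" where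
  "cg_a q u v = (q * u - inverse q * v) / (u - v)"

definition cg_b :: "'a::field \<Rightarrow> 'a \<Rightarrow> 'a \<Rightarrow> 'a" where
  "cg_b q u v = - ((q - inverse q) * v) / (u - v)"

lemma cg_a_mult: "c \<noteq> 0 \<Longrightarrow> cg_a q (c * u) (c * v) = cg_a q u v"
  unfolding cg_a_def by (simp add: right_diff_distrib[symmetric] mult.left_commute)

lemma cg_b_mult: "c \<noteq> 0 \<Longrightarrow> cg_b q (c * u) (c * v) = cg_b q u v"
  unfolding cg_b_def by (simp add: right_diff_distrib[symmetric] mult.left_commute)

definition cg_op :: "complex \<Rightarrow> complex \<Rightarrow> complex
    \<Rightarrow> (complex \<times> complex \<Rightarrow> complex) \<Rightarrow> complex \<times> complex \<Rightarrow> complex" where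
  "cg_op q s p f P = (case P of (x, y) \<Rightarrow>
     (cg_a q x (s * y) * f (x / s, s * y) + cg_b q x (s * y) * f (y, x)) / p)"

lemma cg_op_cong:
  "f (x / s, s * y) = g (x / s, s * y) \<Longrightarrow> f (y, x) = g (y, x)
    \<Longrightarrow> cg_op q s p f (x, y) = cg_op q s p g (x, y)"
  by (simp add: cg_op_def)

lemma linear_op_cg_op: "linear_op (cg_op q s p)"
  unfolding linear_op_def cg_op_def
  by (auto simp: fun_eq_iff algebra_simps add_divide_distrib split: prod.split)

lemma local_op_cg_op:
  assumes s: "s \<noteq> 0"
  shows "local_op (generic2 s) (cg_op q s p)"
proof -
  have "cg_op q s p f P = cg_op q s p g P"
    if fg: "\<forall>P\<in>generic2 s. f P = g P" and P: "P \<in> generic2 s" for f g P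
  proof -
    obtain x y where xy: "P = (x, y)" by fastforce
    note closed = generic2_closed[OF s P[unfolded xy]]
    show ?thesis unfolding xy by (rule cg_op_cong; simp add: fg closed)
  qed
  then show ?thesis unfolding local_op_def by blast
qed

definition cg_weight :: "complex \<Rightarrow> nat \<Rightarrow> nat \<Rightarrow> nat \<Rightarrow> complex" where
  "cg_weight q i j k =
     inverse q * of_bool (k = i) + (q - inverse q) * (of_bool (j \<le> k) - of_bool (i < k))"

lemma CG_eq_cg_weight:
  assumes "q \<noteq> 0"
  shows "CG q p (i, j) (k, l) =
    (if k + l = i + j then p powi (2 * (int l - int i)) / p * cg_weight q i j k else 0)"
  using assms unfolding CG_def cg_weight_def Let_def by (auto simp: field_simps)

lemma cg_weight_eq_0:
  assumes "i \<in> {1..n}" "j \<in> {1..n}" "\<not> (k \<le> i + j \<and> i + j - k \<in> {1..n})"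
  shows "cg_weight q i j k = 0"
  using assms unfolding cg_weight_def by auto

lemma staircase_sum_telescope:
  fixes u v :: complex
  assumes "i \<in> {1..n}" "j \<in> {1..n}"
  shows "(u - v) * (\<Sum>k\<in>{1..n}. (of_bool (j \<le> k) - of_bool (i < k)) * (u ^ k * v ^ (i + j - k)))
     = u ^ (i + 1) * v ^ j - u ^ j * v ^ (i + 1)"
proof -
  define D where "D k = u ^ k * v ^ (i + j + 1 - k)" for k
  have step: "(u - v) * ((of_bool (j \<le> k) - of_bool (i < k)) * (u ^ k * v ^ (i + j - k)))
      = of_bool (j \<le> k) * (D (Suc k) - D k) - of_bool (i < k) * (D (Suc k) - D k)" for k
  proof (cases "k \<le> i + j")
    case True
    then have "i + j + 1 - k = Suc (i + j - k)" "i + j + 1 - Suc k = i + j - k" by auto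
    then show ?thesis unfolding D_def by (simp add: algebra_simps)
  next
    case False
    then show ?thesis by auto
  qed
  have tail: "(\<Sum>k\<in>{1..n}. of_bool (a \<le> k) * (D (Suc k) - D k)) = D (Suc n) - D a"
    if "a \<in> {1..Suc n}" for a
  proof -
    have "(\<Sum>k\<in>{1..n}. of_bool (a \<le> k) * (D (Suc k) - D k)) = (\<Sum>k\<in>{a..n}. D (Suc k) - D k)"
      using that by (intro sum.mono_neutral_cong_right) auto
    also have "\<dots> = D (Suc n) - D a" using that by (intro sum_Suc_diff) auto
    finally show ?thesis .
  qed
  have "(u - v) * (\<Sum>k\<in>{1..n}. (of_bool (j \<le> k) - of_bool (i < k)) * (u ^ k * v ^ (i + j - k)))
      = (\<Sum>k\<in>{1..n}. of_bool (j \<le> k) * (D (Suc k) - D k))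
        - (\<Sum>k\<in>{1..n}. of_bool (Suc i \<le> k) * (D (Suc k) - D k))"
    by (simp add: sum_distrib_left step sum_subtractf Suc_le_eq)
  also have "\<dots> = D (Suc i) - D j"
  proof -
    have a: "j \<in> {1..Suc n}" "Suc i \<in> {1..Suc n}" using assms by auto
    show ?thesis unfolding tail[OF a(1)] tail[OF a(2)] by simp
  qed
  finally show ?thesis unfolding D_def by (simp add: algebra_simps)
qed

lemma cg_weight_sum:
  assumes q: "q \<noteq> 0" and uv: "u \<noteq> v" and ij: "i \<in> {1..n}" "j \<in> {1..n}"
  shows "(\<Sum>k\<in>{1..n}. cg_weight q i j k * (u ^ k * v ^ (i + j - k)))
       = cg_a q u v * (u ^ i * v ^ j) + cg_b q u v * (v ^ i * u ^ j)"
proof -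
  let ?S = "\<Sum>k\<in>{1..n}. (of_bool (j \<le> k) - of_bool (i < k)) * (u ^ k * v ^ (i + j - k))"
  have "cg_weight q i j k * (u ^ k * v ^ (i + j - k))
      = inverse q * (if k = i then u ^ k * v ^ (i + j - k) else 0)
        + (q - inverse q) * ((of_bool (j \<le> k) - of_bool (i < k)) * (u ^ k * v ^ (i + j - k)))" for k
    by (simp add: cg_weight_def algebra_simps)
  then have "(\<Sum>k\<in>{1..n}. cg_weight q i j k * (u ^ k * v ^ (i + j - k)))
      = inverse q * (\<Sum>k\<in>{1..n}. if k = i then u ^ k * v ^ (i + j - k) else 0) + (q - inverse q) * ?S"
    by (simp only: sum.distrib sum_distrib_left)
  moreover have "(\<Sum>k\<in>{1..n}. if k = i then u ^ k * v ^ (i + j - k) else 0) = u ^ i * v ^ j"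
    using ij by simp
  moreover have "?S = (u ^ (i + 1) * v ^ j - u ^ j * v ^ (i + 1)) / (u - v)"
    using staircase_sum_telescope[OF ij, of u v] uv by (simp add: field_simps)
  moreover have "inverse q * (u ^ i * v ^ j) + (q - inverse q) * ((u ^ (i + 1) * v ^ j - u ^ j * v ^ (i + 1)) / (u - v))
      = cg_a q u v * (u ^ i * v ^ j) + cg_b q u v * (v ^ i * u ^ j)"
  proof -
    have "(u - v) * inverse (u - v) = 1" using uv by simp
    moreover have "A * (U * V) + (q - A) * ((U * u * V - W * (V' * v)) * I)
        = (q * u - A * v) * I * (U * V) + - ((q - A) * v) * I * (V' * W)"
      if "(u - v) * I = 1" for A I U V W V' :: complex
      using that by algebra
    ultimately show ?thesis
      unfolding cg_a_def cg_b_def divide_inverse power_add power_one_right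
      by (simp add: mult.assoc)
  qed
  ultimately show ?thesis by simp
qed

lemma powi_double_diff:
  fixes p :: complex
  assumes "p \<noteq> 0"
  shows "p powi (2 * (int l - int i)) = (p ^ 2) ^ l / (p ^ 2) ^ i"
proof -
  have "p powi (2 * (int l - int i)) = p powi int (2 * l) / p powi int (2 * i)"
    using assms by (simp add: power_int_diff algebra_simps)
  also have "\<dots> = p ^ (2 * l) / p ^ (2 * i)"
    by (simp only: power_int_of_nat)
  finally show ?thesis by (simp add: power_mult)
qed

lemma CG_monomial_sum:
  assumes q: "q \<noteq> 0" and p: "p \<noteq> 0" and ij: "i \<in> {1..n}" "j \<in> {1..n}"
    and xy: "x \<noteq> p ^ 2 * y"
  shows "(\<Sum>w\<in>idx2 n. CG q p (i, j) w * mono2 w (x, y)) = cg_op q (p ^ 2) p (mono2 (i, j)) (x, y)"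
proof -
  define s where "s = p ^ 2"
  have s: "s \<noteq> 0" using p by (simp add: s_def)
  have entry: "CG q p (i, j) (k, l) * mono2 (k, l) (x, y) =
      (if l = i + j - k \<and> k \<le> i + j then cg_weight q i j k * (x ^ k * (s * y) ^ l) / (p * s ^ i) else 0)"
    for k l
    using p unfolding CG_eq_cg_weight[OF q] powi_double_diff[OF p] mono2_def s_def
    by (auto simp: power_mult_distrib field_simps)
  have "(\<Sum>w\<in>idx2 n. CG q p (i, j) w * mono2 w (x, y))
      = (\<Sum>k\<in>{1..n}. \<Sum>l\<in>{1..n}. CG q p (i, j) (k, l) * mono2 (k, l) (x, y))"
    by (rule sum_idx2)
  also have "\<dots> = (\<Sum>k\<in>{1..n}. cg_weight q i j k * (x ^ k * (s * y) ^ (i + j - k)) / (p * s ^ i))"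
  proof (intro sum.cong refl)
    fix k
    show "(\<Sum>l\<in>{1..n}. CG q p (i, j) (k, l) * mono2 (k, l) (x, y))
        = cg_weight q i j k * (x ^ k * (s * y) ^ (i + j - k)) / (p * s ^ i)"
    proof (cases "k \<le> i + j \<and> i + j - k \<in> {1..n}")
      case True
      then show ?thesis by (simp add: entry)
    next
      case False
      then show ?thesis by (auto simp: entry cg_weight_eq_0[OF ij False])
    qed
  qed
  also have "\<dots> = (cg_a q x (s * y) * (x ^ i * (s * y) ^ j) + cg_b q x (s * y) * ((s * y) ^ i * x ^ j))
      / (p * s ^ i)"
    using cg_weight_sum[OF q _ ij, of x "s * y"] xy by (simp add: sum_divide_distrib[symmetric] s_def)
  also have "\<dots> = cg_op q s p (mono2 (i, j)) (x, y)"
    unfolding cg_op_def mono2_def using s by (simp add: power_divide power_mult_distrib field_simps)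
  finally show ?thesis unfolding s_def .
qed

lemma realizes_CG:
  assumes "q \<noteq> 0" "p \<noteq> 0"
  shows "realizes (idx2 n) mono2 (generic2 (p ^ 2)) (cg_op q (p ^ 2) p) (CG q p)"
  unfolding realizes_def
proof (intro ballI)
  fix w P assume w: "w \<in> idx2 n" and P: "P \<in> generic2 (p ^ 2)"
  obtain i j where ij: "w = (i, j)" "i \<in> {1..n}" "j \<in> {1..n}"
    using w unfolding idx2_def by auto
  obtain x y where xy: "P = (x, y)" "apart (p ^ 2) x y"
    using P unfolding generic2_def by auto
  show "(\<Sum>v\<in>idx2 n. CG q p w v * mono2 v P) = cg_op q (p ^ 2) p (mono2 w) P"
    unfolding ij(1) xy(1) by (rule CG_monomial_sum[OF assms ij(2,3) apart_imp_neq[OF xy(2)]])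
qed

section \<open>The Yang--Baxter equation\<close>

definition lift12 :: "(('a \<times> 'a \<Rightarrow> 'b) \<Rightarrow> 'a \<times> 'a \<Rightarrow> 'b)
    \<Rightarrow> ('a \<times> 'a \<times> 'a \<Rightarrow> 'b) \<Rightarrow> 'a \<times> 'a \<times> 'a \<Rightarrow> 'b" where
  "lift12 T f P = (case P of (x, y, z) \<Rightarrow> T (\<lambda>(a, b). f (a, b, z)) (x, y))"

definition lift13 :: "(('a \<times> 'a \<Rightarrow> 'b) \<Rightarrow> 'a \<times> 'a \<Rightarrow> 'b)
    \<Rightarrow> ('a \<times> 'a \<times> 'a \<Rightarrow> 'b) \<Rightarrow> 'a \<times> 'a \<times> 'a \<Rightarrow> 'b" where
  "lift13 T f P = (case P of (x, y, z) \<Rightarrow> T (\<lambda>(a, c). f (a, y, c)) (x, z))"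

definition lift23 :: "(('a \<times> 'a \<Rightarrow> 'b) \<Rightarrow> 'a \<times> 'a \<Rightarrow> 'b)
    \<Rightarrow> ('a \<times> 'a \<times> 'a \<Rightarrow> 'b) \<Rightarrow> 'a \<times> 'a \<times> 'a \<Rightarrow> 'b" where
  "lift23 T f P = (case P of (x, y, z) \<Rightarrow> T (\<lambda>(b, c). f (x, b, c)) (y, z))"

lemma linear_op_lift:
  assumes "linear_op T"
  shows "linear_op (lift12 T)" "linear_op (lift13 T)" "linear_op (lift23 T)"
  using assms unfolding linear_op_def lift12_def lift13_def lift23_def
  by (simp_all add: fun_eq_iff split_def)

lemma local_op_lift_cg_op:
  assumes s: "s \<noteq> 0"
  shows "local_op (generic3 s) (lift12 (cg_op q s p))" "local_op (generic3 s) (lift13 (cg_op q s p))"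
    "local_op (generic3 s) (lift23 (cg_op q s p))"
proof -
  have "lift12 (cg_op q s p) f P = lift12 (cg_op q s p) g P"
    "lift13 (cg_op q s p) f P = lift13 (cg_op q s p) g P"
    "lift23 (cg_op q s p) f P = lift23 (cg_op q s p) g P"
    if fg: "\<forall>P\<in>generic3 s. f P = g P" and P: "P \<in> generic3 s" for f g P
  proof -
    obtain x y z where xyz: "P = (x, y, z)" by (metis prod_cases3)
    note closed = generic3_closed[OF s P[unfolded xyz]]
    show "lift12 (cg_op q s p) f P = lift12 (cg_op q s p) g P"
      "lift13 (cg_op q s p) f P = lift13 (cg_op q s p) g P"
      "lift23 (cg_op q s p) f P = lift23 (cg_op q s p) g P"
      unfolding xyz lift12_def lift13_def lift23_def prod.case
      by (rule cg_op_cong; simp add: fg closed)+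
  qed
  then show "local_op (generic3 s) (lift12 (cg_op q s p))" "local_op (generic3 s) (lift13 (cg_op q s p))"
    "local_op (generic3 s) (lift23 (cg_op q s p))"
    unfolding local_op_def by blast+
qed

lemma monomial_sum_leg12:
  assumes "m \<in> {1..n}"
  shows "(\<Sum>v\<in>idx3 n. leg12 A (i, j, m) v * mono3 v (x, y, z))
       = z ^ m * (\<Sum>v\<in>idx2 n. A (i, j) v * mono2 v (x, y))"
  using assms unfolding sum_idx3_split(1) leg12_def mono3_def mono2_def
  by (simp add: split_def sum_distrib_left if_distrib if_distribR sum.delta' mult_ac cong: if_cong)

lemma monomial_sum_leg13:
  assumes "j \<in> {1..n}"
  shows "(\<Sum>v\<in>idx3 n. leg13 A (i, j, m) v * mono3 v (x, y, z))
       = y ^ j * (\<Sum>v\<in>idx2 n. A (i, m) v * mono2 v (x, z))"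
  using assms unfolding sum_idx3_split(2) leg13_def mono3_def mono2_def
  by (simp add: split_def sum_distrib_left if_distrib if_distribR sum.delta' mult_ac cong: if_cong)

lemma monomial_sum_leg23:
  assumes "i \<in> {1..n}"
  shows "(\<Sum>v\<in>idx3 n. leg23 A (i, j, m) v * mono3 v (x, y, z))
       = x ^ i * (\<Sum>v\<in>idx2 n. A (j, m) v * mono2 v (y, z))"
  using assms unfolding sum_idx3_split(3) leg23_def mono3_def mono2_def
  by (simp add: split_def sum_distrib_left if_distrib if_distribR sum.delta' mult_ac cong: if_cong)

lemma realizes_leg12:
  assumes A: "realizes (idx2 n) mono2 G2 T A" and T: "linear_op T"
    and G: "\<And>x y z. (x, y, z) \<in> G3 \<Longrightarrow> (x, y) \<in> G2"
  shows "realizes (idx3 n) mono3 G3 (lift12 T) (leg12 A)"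
  unfolding realizes_def
proof (intro ballI)
  fix w P assume w: "w \<in> idx3 n" and P: "P \<in> G3"
  obtain i j m x y z where wP: "w = (i, j, m)" "P = (x, y, z)" by (metis prod_cases3)
  have ij: "(i, j) \<in> idx2 n" "m \<in> {1..n}" using w unfolding wP idx2_def idx3_def by auto
  have "(\<Sum>v\<in>idx3 n. leg12 A w v * mono3 v P) = z ^ m * (\<Sum>v\<in>idx2 n. A (i, j) v * mono2 v (x, y))"
    unfolding wP by (rule monomial_sum_leg12[OF ij(2)])
  also have "\<dots> = z ^ m * T (mono2 (i, j)) (x, y)"
    using A ij(1) G P unfolding wP realizes_def by auto
  also have "\<dots> = lift12 T (mono3 w) P"
    using T by (simp add: linear_op_def lift12_def wP mono3_def mono2_def[abs_def] split_def mult_ac)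
  finally show "(\<Sum>v\<in>idx3 n. leg12 A w v * mono3 v P) = lift12 T (mono3 w) P" .
qed

lemma realizes_leg13:
  assumes A: "realizes (idx2 n) mono2 G2 T A" and T: "linear_op T"
    and G: "\<And>x y z. (x, y, z) \<in> G3 \<Longrightarrow> (x, z) \<in> G2"
  shows "realizes (idx3 n) mono3 G3 (lift13 T) (leg13 A)"
  unfolding realizes_def
proof (intro ballI)
  fix w P assume w: "w \<in> idx3 n" and P: "P \<in> G3"
  obtain i j m x y z where wP: "w = (i, j, m)" "P = (x, y, z)" by (metis prod_cases3)
  have im: "(i, m) \<in> idx2 n" "j \<in> {1..n}" using w unfolding wP idx2_def idx3_def by auto
  have "(\<Sum>v\<in>idx3 n. leg13 A w v * mono3 v P) = y ^ j * (\<Sum>v\<in>idx2 n. A (i, m) v * mono2 v (x, z))"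
    unfolding wP by (rule monomial_sum_leg13[OF im(2)])
  also have "\<dots> = y ^ j * T (mono2 (i, m)) (x, z)"
    using A im(1) G P unfolding wP realizes_def by auto
  also have "\<dots> = lift13 T (mono3 w) P"
    using T by (simp add: linear_op_def lift13_def wP mono3_def mono2_def[abs_def] split_def mult_ac)
  finally show "(\<Sum>v\<in>idx3 n. leg13 A w v * mono3 v P) = lift13 T (mono3 w) P" .
qed

lemma realizes_leg23:
  assumes A: "realizes (idx2 n) mono2 G2 T A" and T: "linear_op T"
    and G: "\<And>x y z. (x, y, z) \<in> G3 \<Longrightarrow> (y, z) \<in> G2"
  shows "realizes (idx3 n) mono3 G3 (lift23 T) (leg23 A)"
  unfolding realizes_def
proof (intro ballI)
  fix w P assume w: "w \<in> idx3 n" and P: "P \<in> G3"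
  obtain i j m x y z where wP: "w = (i, j, m)" "P = (x, y, z)" by (metis prod_cases3)
  have jm: "(j, m) \<in> idx2 n" "i \<in> {1..n}" using w unfolding wP idx2_def idx3_def by auto
  have "(\<Sum>v\<in>idx3 n. leg23 A w v * mono3 v P) = x ^ i * (\<Sum>v\<in>idx2 n. A (j, m) v * mono2 v (y, z))"
    unfolding wP by (rule monomial_sum_leg23[OF jm(2)])
  also have "\<dots> = x ^ i * T (mono2 (j, m)) (y, z)"
    using A jm(1) G P unfolding wP realizes_def by auto
  also have "\<dots> = lift23 T (mono3 w) P"
    using T by (simp add: linear_op_def lift23_def wP mono3_def mono2_def[abs_def] split_def mult_ac)
  finally show "(\<Sum>v\<in>idx3 n. leg23 A w v * mono3 v P) = lift23 T (mono3 w) P" .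
qed

lemma cg_coeff_ybe:
  fixes q u1 u2 u3 :: "'a::field"
  assumes "q \<noteq> 0" "u1 \<noteq> u2" "u1 \<noteq> u3" "u2 \<noteq> u3"
  shows "cg_a q u1 u2 * cg_b q u1 u3 * cg_a q u2 u1 + cg_b q u1 u2 * cg_b q u2 u3 * cg_b q u1 u2
       = cg_a q u2 u3 * cg_b q u1 u3 * cg_a q u3 u2 + cg_b q u2 u3 * cg_b q u1 u2 * cg_b q u2 u3"
    and "cg_a q u1 u2 * cg_b q u1 u3 * cg_b q u2 u1 + cg_b q u1 u2 * cg_b q u2 u3 * cg_a q u1 u2
       = cg_b q u2 u3 * cg_a q u1 u2 * cg_b q u1 u3"
    and "cg_b q u1 u2 * cg_a q u2 u3 * cg_b q u1 u3
       = cg_a q u2 u3 * cg_b q u1 u3 * cg_b q u3 u2 + cg_b q u2 u3 * cg_b q u1 u2 * cg_a q u2 u3"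
proof -
  have "(u1 - u2) * inverse (u1 - u2) = 1" "(u1 - u3) * inverse (u1 - u3) = 1"
    "(u2 - u3) * inverse (u2 - u3) = 1" "(u2 - u1) * inverse (u2 - u1) = 1"
    "(u3 - u2) * inverse (u3 - u2) = 1" "q * inverse q = 1"
    using assms by auto
  then show "cg_a q u1 u2 * cg_b q u1 u3 * cg_a q u2 u1 + cg_b q u1 u2 * cg_b q u2 u3 * cg_b q u1 u2
       = cg_a q u2 u3 * cg_b q u1 u3 * cg_a q u3 u2 + cg_b q u2 u3 * cg_b q u1 u2 * cg_b q u2 u3"
    and "cg_a q u1 u2 * cg_b q u1 u3 * cg_b q u2 u1 + cg_b q u1 u2 * cg_b q u2 u3 * cg_a q u1 u2
       = cg_b q u2 u3 * cg_a q u1 u2 * cg_b q u1 u3"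
    and "cg_b q u1 u2 * cg_a q u2 u3 * cg_b q u1 u3
       = cg_a q u2 u3 * cg_b q u1 u3 * cg_b q u3 u2 + cg_b q u2 u3 * cg_b q u1 u2 * cg_a q u2 u3"
    unfolding cg_a_def cg_b_def divide_inverse by algebra+
qed

lemma cg_op_ybe:
  assumes q: "q \<noteq> 0" and s: "s \<noteq> 0" and P: "P \<in> generic3 s"
  shows "lift12 (cg_op q s p) (lift13 (cg_op q s p) (lift23 (cg_op q s p) f)) P
       = lift23 (cg_op q s p) (lift13 (cg_op q s p) (lift12 (cg_op q s p) f)) P"
proof -
  obtain x y z where xyz: "P = (x, y, z)" by (metis prod_cases3)
  have u: "x \<noteq> s * y" "x \<noteq> s * (s * z)" "s * y \<noteq> s * (s * z)"
    using P s apart_imp_neq apart_imp_neq_sq unfolding xyz generic3_def by auto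
  define a12 where "a12 = cg_a q x (s * y)"
  define a13 where "a13 = cg_a q x (s * (s * z))"
  define a23 where "a23 = cg_a q (s * y) (s * (s * z))"
  define a21 where "a21 = cg_a q (s * y) x"
  define a32 where "a32 = cg_a q (s * (s * z)) (s * y)"
  define b12 where "b12 = cg_b q x (s * y)"
  define b13 where "b13 = cg_b q x (s * (s * z))"
  define b23 where "b23 = cg_b q (s * y) (s * (s * z))"
  define b21 where "b21 = cg_b q (s * y) x"
  define b32 where "b32 = cg_b q (s * (s * z)) (s * y)"
  (* by homogeneity, every coefficient is a function of x, s * y and s * (s * z) *)
  have rescaled: "cg_a q (x / s) (s * z) = a13" "cg_b q (x / s) (s * z) = b13"
    "cg_a q y (s * z) = a23" "cg_b q y (s * z) = b23"
    "cg_a q (x / s) y = a12" "cg_b q (x / s) y = b12"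
    "cg_a q (s * z) y = a32" "cg_b q (s * z) y = b32"
    unfolding a13_def b13_def a23_def b23_def a12_def b12_def a32_def b32_def
    using cg_a_mult[OF s, of q "x / s" "s * z"] cg_b_mult[OF s, of q "x / s" "s * z"]
      cg_a_mult[OF s, of q y "s * z"] cg_b_mult[OF s, of q y "s * z"]
      cg_a_mult[OF s, of q "x / s" y] cg_b_mult[OF s, of q "x / s" y]
      cg_a_mult[OF s, of q "s * z" y] cg_b_mult[OF s, of q "s * z" y] s
    by (simp_all add: mult.commute)
  note coeff = cg_coeff_ybe[OF q u, folded a12_def a13_def a23_def a21_def a32_def
      b12_def b13_def b23_def b21_def b32_def]
  show ?thesis
    unfolding xyz lift12_def lift13_def lift23_def cg_op_def
    by (insert coeff, simp add: s rescaled flip: a12_def a13_def a23_def a21_def a32_def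
        b12_def b13_def b23_def b21_def b32_def, simp add: divide_simps, algebra)
qed

lemma CG_ybe:
  assumes q: "q \<noteq> 0" and p: "p \<noteq> 0" and w: "w \<in> idx3 n" and v: "v \<in> idx3 n"
  shows "comp3 n (comp3 n (leg12 (CG q p)) (leg13 (CG q p))) (leg23 (CG q p)) w v
       = comp3 n (comp3 n (leg23 (CG q p)) (leg13 (CG q p))) (leg12 (CG q p)) w v"
proof -
  let ?R = "cg_op q (p ^ 2) p" and ?G = "generic3 (p ^ 2)"
  have s: "p ^ 2 \<noteq> 0" using p by simp
  have G: "(x, y) \<in> generic2 (p ^ 2)" "(x, z) \<in> generic2 (p ^ 2)" "(y, z) \<in> generic2 (p ^ 2)"
    if "(x, y, z) \<in> ?G" for x y z
    using that by (simp_all add: generic2_def generic3_def)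
  note R = realizes_CG[OF q p] and lin = linear_op_cg_op[of q "p ^ 2" p]
  have L12: "realizes (idx3 n) mono3 ?G (lift12 ?R) (leg12 (CG q p))"
    by (rule realizes_leg12[OF R lin G(1)])
  have L13: "realizes (idx3 n) mono3 ?G (lift13 ?R) (leg13 (CG q p))"
    by (rule realizes_leg13[OF R lin G(2)])
  have L23: "realizes (idx3 n) mono3 ?G (lift23 ?R) (leg23 (CG q p))"
    by (rule realizes_leg23[OF R lin G(3)])
  note lin_lift = linear_op_lift[OF lin] and loc_lift = local_op_lift_cg_op[OF s, of q p]
  have lhs: "realizes (idx3 n) mono3 ?G (\<lambda>f. lift12 ?R (lift13 ?R (lift23 ?R f)))
      (comp3 n (comp3 n (leg12 (CG q p)) (leg13 (CG q p))) (leg23 (CG q p)))"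
    by (rule realizes_comp3[OF realizes_comp3[OF L12 L13 lin_lift(1) loc_lift(1)] L23
          linear_op_compose[OF lin_lift(1,2)] local_op_compose[OF loc_lift(1,2)]])
  have rhs: "realizes (idx3 n) mono3 ?G (\<lambda>f. lift23 ?R (lift13 ?R (lift12 ?R f)))
      (comp3 n (comp3 n (leg23 (CG q p)) (leg13 (CG q p))) (leg12 (CG q p)))"
    by (rule realizes_comp3[OF realizes_comp3[OF L23 L13 lin_lift(3) loc_lift(3)] L12
          linear_op_compose[OF lin_lift(3,2)] local_op_compose[OF loc_lift(3,2)]])
  show ?thesis
    by (rule realizes_unique[OF lhs rhs lin_independent_mono3 cg_op_ybe[OF q s] w v])
qed

section \<open>The Hecke relation\<close>

definition cg_check_op :: "complex \<Rightarrow> complex \<Rightarrow> complex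
    \<Rightarrow> (complex \<times> complex \<Rightarrow> complex) \<Rightarrow> complex \<times> complex \<Rightarrow> complex" where
  "cg_check_op q s p f P = p * cg_op q s p (\<lambda>Q. f (snd Q, fst Q)) P"

lemma cg_check_op_eq:
  "p \<noteq> 0 \<Longrightarrow>
    cg_check_op q s p f (x, y) = cg_a q x (s * y) * f (s * y, x / s) + cg_b q x (s * y) * f (x, y)"
  unfolding cg_check_op_def cg_op_def by simp

lemma linear_op_cg_check_op: "linear_op (cg_check_op q s p)"
  using linear_op_cg_op[of q s p] unfolding linear_op_def cg_check_op_def
  by (simp add: fun_eq_iff algebra_simps)

lemma local_op_cg_check_op:
  assumes s: "s \<noteq> 0"
  shows "local_op (generic2 s) (cg_check_op q s p)"
  unfolding local_op_def cg_check_op_def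
proof (intro allI impI ballI)
  fix f g :: "complex \<times> complex \<Rightarrow> complex" and P
  assume fg: "\<forall>P\<in>generic2 s. f P = g P" and P: "P \<in> generic2 s"
  have "f (snd Q, fst Q) = g (snd Q, fst Q)" if "Q \<in> generic2 s" for Q
    using fg generic2_closed(2)[OF s, of "fst Q" "snd Q"] that by simp
  from local_opD[OF local_op_cg_op[OF s] this P]
  show "p * cg_op q s p (\<lambda>Q. f (snd Q, fst Q)) P = p * cg_op q s p (\<lambda>Q. g (snd Q, fst Q)) P"
    by simp
qed

lemma realizes_CGcheck:
  assumes "q \<noteq> 0" "p \<noteq> 0"
  shows "realizes (idx2 n) mono2 (generic2 (p ^ 2)) (cg_check_op q (p ^ 2) p) (CGcheck n q p)"
proof -
  have "realizes (idx2 n) mono2 (generic2 (p ^ 2))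
      (\<lambda>f. cg_op q (p ^ 2) p (\<lambda>P. f (snd P, fst P))) (comp2 n (CG q p) flip)"
    using assms by (intro realizes_comp2[OF realizes_CG realizes_flip linear_op_cg_op local_op_cg_op]) simp_all
  from realizes_scale[OF this, of p] show ?thesis
    unfolding cg_check_op_def[abs_def] CGcheck_def[abs_def] .
qed

lemma cg_coeff_hecke:
  fixes q u v :: "'a::field"
  assumes "q \<noteq> 0" "u \<noteq> v"
  shows "cg_a q u v * cg_a q v u + cg_b q u v * cg_b q u v = (q - inverse q) * cg_b q u v + 1"
    and "cg_a q u v * cg_b q v u + cg_b q u v * cg_a q u v = (q - inverse q) * cg_a q u v"
proof -
  have "(u - v) * inverse (u - v) = 1" "(v - u) * inverse (v - u) = 1" "q * inverse q = 1"
    using assms by auto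
  then show "cg_a q u v * cg_a q v u + cg_b q u v * cg_b q u v = (q - inverse q) * cg_b q u v + 1"
    and "cg_a q u v * cg_b q v u + cg_b q u v * cg_a q u v = (q - inverse q) * cg_a q u v"
    unfolding cg_a_def cg_b_def divide_inverse by algebra+
qed

lemma cg_check_op_hecke:
  assumes q: "q \<noteq> 0" and s: "s \<noteq> 0" and p: "p \<noteq> 0" and xy: "x \<noteq> s * y"
  shows "cg_check_op q s p (cg_check_op q s p f) (x, y)
       = (q - inverse q) * cg_check_op q s p f (x, y) + f (x, y)"
proof -
  define a where "a = cg_a q x (s * y)"
  define a' where "a' = cg_a q (s * y) x"
  define b where "b = cg_b q x (s * y)"
  define b' where "b' = cg_b q (s * y) x"
  have coeff: "a * a' + b * b = (q - inverse q) * b + 1" "a * b' + b * a = (q - inverse q) * a"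
    using cg_coeff_hecke[OF q xy] unfolding a_def a'_def b_def b'_def by auto
  have "cg_check_op q s p (cg_check_op q s p f) (x, y)
      = a * (a' * f (x, y) + b' * f (s * y, x / s)) + b * (a * f (s * y, x / s) + b * f (x, y))"
    using s p by (simp add: cg_check_op_eq a_def a'_def b_def b'_def)
  also have "\<dots> = (a * a' + b * b) * f (x, y) + (a * b' + b * a) * f (s * y, x / s)"
    by (simp add: algebra_simps)
  also have "\<dots> = (q - inverse q) * (a * f (s * y, x / s) + b * f (x, y)) + f (x, y)"
    unfolding coeff by (simp add: algebra_simps)
  also have "\<dots> = (q - inverse q) * cg_check_op q s p f (x, y) + f (x, y)"
    using p by (simp add: cg_check_op_eq a_def b_def)
  finally show ?thesis .
qed

lemma CG_hecke:
  assumes q: "q \<noteq> 0" and p: "p \<noteq> 0" and w: "w \<in> idx2 n" and v: "v \<in> idx2 n"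
  shows "comp2 n (\<lambda>a b. CGcheck n q p a b - q * id2 a b)
                 (\<lambda>a b. CGcheck n q p a b + inverse q * id2 a b) w v = 0"
proof -
  let ?T = "cg_check_op q (p ^ 2) p" and ?G = "generic2 (p ^ 2)"
  have s: "p ^ 2 \<noteq> 0" using p by simp
  note T = realizes_CGcheck[OF q p, of n]
  have minus: "realizes (idx2 n) mono2 ?G (\<lambda>f P. ?T f P + (- q) * f P)
      (\<lambda>a b. CGcheck n q p a b - q * id2 a b)"
    using realizes_add_id[OF _ T, of "- q"] by (simp add: id2_def)
  have plus: "realizes (idx2 n) mono2 ?G (\<lambda>f P. ?T f P + inverse q * f P)
      (\<lambda>a b. CGcheck n q p a b + inverse q * id2 a b)"
    using realizes_add_id[OF _ T, of "inverse q"] by (simp add: id2_def)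
  have prod: "realizes (idx2 n) mono2 ?G
      (\<lambda>f. (\<lambda>f P. ?T f P + (- q) * f P) ((\<lambda>f P. ?T f P + inverse q * f P) f))
      (comp2 n (\<lambda>a b. CGcheck n q p a b - q * id2 a b) (\<lambda>a b. CGcheck n q p a b + inverse q * id2 a b))"
    by (rule realizes_comp2[OF minus plus linear_op_add_id[OF linear_op_cg_check_op]
          local_op_add_id[OF local_op_cg_check_op[OF s]]])
  have hecke: "?T (\<lambda>Q. ?T f Q + inverse q * f Q) P + - q * (?T f P + inverse q * f P) = 0"
    if "P \<in> ?G" for f P
  proof -
    obtain x y where xy: "P = (x, y)" by fastforce
    with that have "x \<noteq> p ^ 2 * y" by (simp add: generic2_def apart_imp_neq)
    have "?T (\<lambda>Q. ?T f Q + inverse q * f Q) P = ?T (?T f) P + inverse q * ?T f P"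
      using linear_op_cg_check_op[of q "p ^ 2" p] unfolding linear_op_def by simp
    then show ?thesis
      using cg_check_op_hecke[OF q s p \<open>x \<noteq> p ^ 2 * y\<close>] q unfolding xy by (simp add: algebra_simps)
  qed
  show ?thesis
    using realizes_unique[OF prod realizes_zero lin_independent_mono2 _ w v] hecke by simp
qed

theorem mainTheorem7:
  fixes q p :: complex and n :: nat
  assumes "q \<noteq> 0" and "p \<noteq> 0" and "n \<ge> 1"
  shows "(\<forall>x\<in>idx3 n. \<forall>y\<in>idx3 n.
            comp3 n (comp3 n (leg12 (CG q p)) (leg13 (CG q p))) (leg23 (CG q p)) x y
          = comp3 n (comp3 n (leg23 (CG q p)) (leg13 (CG q p))) (leg12 (CG q p)) x y)
       \<and> (\<forall>x\<in>idx2 n. \<forall>y\<in>idx2 n.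
            comp2 n (\<lambda>a b. CGcheck n q p a b - q * id2 a b)
                    (\<lambda>a b. CGcheck n q p a b + inverse q * id2 a b) x y = 0)"
  using CG_ybe[OF assms(1,2)] CG_hecke[OF assms(1,2)] by blast

end
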